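(* Let $1\le k<r$ and let $T_k$ be a single-vertex-bag weighted threshold matrix on $v_k,\dots,v_r$ with vertex weights $p^{(k)}_i$ ($k\le i\le r$) and edge weights $\epsilon^{(k)}_{i,j}$ ($k\le i<j\le r$, $j$ even). Set $\epsilon^{(k)}_{k,k+1}=0$ if $k+1$ is odd. Suppose that $p^{(k)}_k=p^{(k)}_{k+1}$ and $\epsilon^{(k)}_{k,j}=\epsilon^{(k)}_{k+1,j}$ for every even $j$ with $k+1<j\le r$. Let $T_{k+1}$ be the single-vertex-bag weighted threshold matrix on $v_{k+1},\dots,v_r$ with (a) $p^{(k+1)}_i=p^{(k)}_i$ for $k+2\le i\le r$; (b) $p^{(k+1)}_{k+1}=p^{(k)}_k+\epsilon^{(k)}_{k,k+1}$; (c) $\epsilon^{(k+1)}_{i,j}=\epsilon^{(k)}_{i,j}$ for $k+1<i<j\le r$, $j$ even; (d) $\epsilon^{(k+1)}_{k+1,j}=\sqrt2\,\epsilon^{(k)}_{k+1,j}$ for $k+1<j\le r$, $j$ even. Then, as multisets, $\mathrm{Spec}(T_k)=\mathrm{Spec}(T_{k+1})\cup\{p^{(k)}_k-\epsilon^{(k)}_{k,k+1}\}$.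
   Context: A single-vertex-bag weighted threshold matrix on $v_k,\dots,v_r$ is the real symmetric matrix indexed by $v_k,\dots,v_r$ with diagonal entries $p_i$ (the vertex weights) and, for $i<j$, entry $\epsilon_{i,j}\ne 0$ at positions $(v_i,v_j),(v_j,v_i)$ if $j$ is even and entry $0$ if $j$ is odd (so $v_i$ and $v_j$, $i<j$, are adjacent iff $j$ is even; this is a threshold graph whose bags are singletons, the bag of index $i$ being a union-bag for $i$ odd and a join-bag for $i$ even). $\mathrm{Spec}$ denotes the multiset of eigenvalues, and $\cup$ of multisets adds multiplicities. *)

theory Defs
  imports "Jordan_Normal_Form.Char_Poly" "HOL-Computational_Algebra.Polynomial"
begin

(* Row/column index a (0 <= a <= r-k) corresponds to vertex v_(k+a). *)
definition sv_threshold_mat :: "nat \<Rightarrow> nat \<Rightarrow> (nat \<Rightarrow> real) \<Rightarrow> (nat \<Rightarrow> nat \<Rightarrow> real) \<Rightarrow> real mat" where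
  "sv_threshold_mat k r p eps = mat (r + 1 - k) (r + 1 - k) (\<lambda>(a, b).
      let i = k + a; j = k + b in
      if i = j then p i
      else if even (max i j) then eps (min i j) (max i j) else 0)"

definition sv_threshold_weights :: "nat \<Rightarrow> nat \<Rightarrow> (nat \<Rightarrow> nat \<Rightarrow> real) \<Rightarrow> bool" where
  "sv_threshold_weights k r eps \<longleftrightarrow> (\<forall>i j. k \<le> i \<and> i < j \<and> j \<le> r \<and> even j \<longrightarrow> eps i j \<noteq> 0)"

definition Spec :: "real mat \<Rightarrow> complex multiset" where
  "Spec A = proots (char_poly (map_mat complex_of_real A))"

end

theory Submission
  imports Defs
begin

text \<open>The vertices v_k and v_(k+1) are twins: equal weights and identical weighted
  neighbourhoods among the other vertices. Rotating their coordinates by 45 degrees, i.e. passing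
  to the orthonormal vectors (e_k - e_(k+1))/sqrt 2 and (e_k + e_(k+1))/sqrt 2, splits the matrix
  into the 1 x 1 block p_k - eps_(k,k+1) on the antisymmetric vector and, on the symmetric vector
  together with the remaining coordinates, the matrix in which the twins are merged into a single
  vertex of weight p_k + eps_(k,k+1) whose edge weights are scaled by sqrt 2. Similar matrices have
  the same characteristic polynomial, and that of a block diagonal matrix is the product of those
  of its blocks.\<close>


definition plane_rotation_mat :: "nat \<Rightarrow> 'a::comm_ring_1 \<Rightarrow> 'a \<Rightarrow> 'a mat" where
  "plane_rotation_mat n c s = mat n n (\<lambda>(a, b).
     if a < 2 \<and> b < 2 then (if a = b then c else if a = 0 then s else - s)
     else if a = b then 1 else 0)"

lemma dim_plane_rotation_mat [simp]:
  "dim_row (plane_rotation_mat n c s) = n" "dim_col (plane_rotation_mat n c s) = n"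
  by (simp_all add: plane_rotation_mat_def)

lemma plane_rotation_mat_carrier [simp]: "plane_rotation_mat n c s \<in> carrier_mat n n"
  by (simp add: carrier_matI)

lemma index_plane_rotation_mat:
  "a < n \<Longrightarrow> b < n \<Longrightarrow> plane_rotation_mat n c s $$ (a, b) =
     (if a < 2 \<and> b < 2 then (if a = b then c else if a = 0 then s else - s)
      else if a = b then 1 else 0)"
  by (simp add: plane_rotation_mat_def)

lemma sum_atLeast0_split_two:
  "2 \<le> (n::nat) \<Longrightarrow> (\<Sum>c\<in>{0..<n}. f c) = f 0 + f 1 + (\<Sum>c\<in>{2..<n}. f c)"
proof -
  assume "2 \<le> n"
  then have "{0..<n} = insert 0 (insert 1 {2..<n})" by auto
  then show ?thesis by (simp add: add.assoc)
qed

lemma index_mult_plane_rotation_mat: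
  assumes X: "X \<in> carrier_mat n n" and n: "2 \<le> n" and ab: "a < n" "b < n"
  shows "(X * plane_rotation_mat n c s) $$ (a, b) =
    (if b = 0 then c * X $$ (a, 0) - s * X $$ (a, 1)
     else if b = 1 then s * X $$ (a, 0) + c * X $$ (a, 1) else X $$ (a, b))"
proof -
  let ?R = "plane_rotation_mat n c s"
  have "(X * ?R) $$ (a, b) = (\<Sum>d\<in>{0..<n}. X $$ (a, d) * ?R $$ (d, b))"
    using X ab by (simp add: index_mult_mat scalar_prod_def)
  also have "\<dots> = X $$ (a, 0) * ?R $$ (0, b) + X $$ (a, 1) * ?R $$ (1, b)
      + (\<Sum>d\<in>{2..<n}. X $$ (a, d) * ?R $$ (d, b))"
    using n by (rule sum_atLeast0_split_two)
  also have "(\<Sum>d\<in>{2..<n}. X $$ (a, d) * ?R $$ (d, b)) = (\<Sum>d\<in>{2..<n}. if d = b then X $$ (a, d) else 0)"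
    by (rule sum.cong) (use ab in \<open>auto simp: index_plane_rotation_mat\<close>)
  finally show ?thesis
    using n ab by (simp add: index_plane_rotation_mat algebra_simps)
qed

lemma index_plane_rotation_mat_mult:
  assumes Y: "Y \<in> carrier_mat n n" and n: "2 \<le> n" and ab: "a < n" "b < n"
  shows "(plane_rotation_mat n c s * Y) $$ (a, b) =
    (if a = 0 then c * Y $$ (0, b) + s * Y $$ (1, b)
     else if a = 1 then c * Y $$ (1, b) - s * Y $$ (0, b) else Y $$ (a, b))"
proof -
  let ?R = "plane_rotation_mat n c s"
  have "(?R * Y) $$ (a, b) = (\<Sum>d\<in>{0..<n}. ?R $$ (a, d) * Y $$ (d, b))"
    using Y ab by (simp add: index_mult_mat scalar_prod_def)
  also have "\<dots> = ?R $$ (a, 0) * Y $$ (0, b) + ?R $$ (a, 1) * Y $$ (1, b)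
      + (\<Sum>d\<in>{2..<n}. ?R $$ (a, d) * Y $$ (d, b))"
    using n by (rule sum_atLeast0_split_two)
  also have "(\<Sum>d\<in>{2..<n}. ?R $$ (a, d) * Y $$ (d, b)) = (\<Sum>d\<in>{2..<n}. if a = d then Y $$ (d, b) else 0)"
    by (rule sum.cong) (use ab in \<open>auto simp: index_plane_rotation_mat\<close>)
  finally show ?thesis
    using n ab by (simp add: index_plane_rotation_mat algebra_simps)
qed

lemma plane_rotation_mat_inverse:
  assumes "c * c + s * s = 1" and n: "2 \<le> n"
  shows "plane_rotation_mat n c s * plane_rotation_mat n c (- s) = 1\<^sub>m n"
proof (rule eq_matI)
  fix a b assume "a < dim_row (1\<^sub>m n)" "b < dim_col (1\<^sub>m n)"
  then have ab: "a < n" "b < n" by simp_all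
  show "(plane_rotation_mat n c s * plane_rotation_mat n c (- s)) $$ (a, b) = 1\<^sub>m n $$ (a, b)"
    unfolding index_plane_rotation_mat_mult[OF plane_rotation_mat_carrier n ab]
    using assms ab by (auto simp: index_plane_rotation_mat algebra_simps)
qed simp_all

lemma similar_mat_by_plane_rotation:
  assumes A: "A \<in> carrier_mat n n" and B: "B \<in> carrier_mat n n" and n: "2 \<le> n"
    and rot: "c * c + s * s = 1"
    and AR: "A * plane_rotation_mat n c s = plane_rotation_mat n c s * B"
  shows "similar_mat A B"
proof (rule similar_matI)
  let ?R = "plane_rotation_mat n c s" and ?R' = "plane_rotation_mat n c (- s)"
  show "{A, B, ?R, ?R'} \<subseteq> carrier_mat n n" using A B by simp
  show RR': "?R * ?R' = 1\<^sub>m n" and "?R' * ?R = 1\<^sub>m n"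
    using plane_rotation_mat_inverse[OF _ n, of c s] plane_rotation_mat_inverse[OF _ n, of c "- s"] rot
    by simp_all
  have "A = A * (?R * ?R')" using A RR' by simp
  also have "\<dots> = A * ?R * ?R'" using A by (auto intro!: assoc_mult_mat[symmetric])
  also have "\<dots> = ?R * B * ?R'" by (simp only: AR)
  finally show "A = ?R * B * ?R'" .
qed

lemma char_poly_singleton_mat: "char_poly (mat 1 1 (\<lambda>_. l)) = [:- l, 1:]"
  unfolding char_poly_defs by (subst det_single) auto

lemma char_poly_twin_reduction:
  fixes A A' :: "'a::field_char_0 mat"
  assumes A: "A \<in> carrier_mat (Suc m) (Suc m)" and A': "A' \<in> carrier_mat m m" and m: "0 < m"
    and s: "s * s = 2"
    and twin_diag: "A $$ (1, 1) = A $$ (0, 0)" and twin_edge: "A $$ (1, 0) = A $$ (0, 1)"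
    and twin_row: "\<And>c. 2 \<le> c \<Longrightarrow> c \<le> m \<Longrightarrow> A $$ (1, c) = A $$ (0, c)"
    and twin_col: "\<And>c. 2 \<le> c \<Longrightarrow> c \<le> m \<Longrightarrow> A $$ (c, 1) = A $$ (c, 0)"
    and merged_diag: "A' $$ (0, 0) = A $$ (0, 0) + A $$ (0, 1)"
    and merged_row: "\<And>c. 0 < c \<Longrightarrow> c < m \<Longrightarrow> A' $$ (0, c) = s * A $$ (0, c + 1)"
    and merged_col: "\<And>c. 0 < c \<Longrightarrow> c < m \<Longrightarrow> A' $$ (c, 0) = s * A $$ (c + 1, 0)"
    and merged_rest: "\<And>a b. 0 < a \<Longrightarrow> a < m \<Longrightarrow> 0 < b \<Longrightarrow> b < m \<Longrightarrow>
      A' $$ (a, b) = A $$ (a + 1, b + 1)"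
  shows "char_poly A = [:- (A $$ (0, 0) - A $$ (0, 1)), 1:] * char_poly A'"
proof -
  note twin = twin_diag twin_edge twin_row twin_col
  define l where "l = A $$ (0, 0) - A $$ (0, 1)"
  define B where "B = four_block_mat (mat 1 1 (\<lambda>_. l)) (0\<^sub>m 1 m) (0\<^sub>m m 1) A'"
  define t where "t = s / 2" \<comment> \<open>\<open>t = 1 / s\<close>, so \<open>R\<close> is the rotation by 45 degrees\<close>
  define R where "R = plane_rotation_mat (Suc m) t t"
  have n: "2 \<le> Suc m" using m by simp
  have t_s: "t * s = 1" and t_t: "t * t + t * t = 1"
    using s by (simp_all add: t_def field_simps)
  have t_s_x: "t * (s * x) = x" and t_x_t_x: "t * x + t * x = s * x" for x
    using t_s by (simp_all add: t_def mult.assoc[symmetric] flip: distrib_right)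
  have B: "B \<in> carrier_mat (Suc m) (Suc m)"
    using four_block_carrier_mat[OF _ A', of "mat 1 1 (\<lambda>_. l)" 1 1] by (simp add: B_def)
  have index_B: "B $$ (a, b) = (if a = 0 then (if b = 0 then l else 0)
      else if b = 0 then 0 else A' $$ (a - 1, b - 1))" if "a < Suc m" "b < Suc m" for a b
    using that A' by (auto simp: B_def index_mat_four_block)
  have AR: "A * R = R * B"
  proof (rule eq_matI)
    fix a b assume "a < dim_row (R * B)" "b < dim_col (R * B)"
    then have ab: "a < Suc m" "b < Suc m" using B by (simp_all add: R_def)
    show "(A * R) $$ (a, b) = (R * B) $$ (a, b)"
      unfolding R_def index_mult_plane_rotation_mat[OF A n ab] index_plane_rotation_mat_mult[OF B n ab]
      using ab
      by (cases "a = 0"; cases "a = 1"; cases "b = 0"; cases "b = 1")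
        (simp_all add: index_B m l_def merged_diag merged_row merged_col merged_rest
          twin[unfolded One_nat_def] t_s t_s_x t_x_t_x distrib_left right_diff_distrib)
  qed (use A B in \<open>simp_all add: R_def\<close>)
  have "similar_mat A B"
    using similar_mat_by_plane_rotation[OF A B n t_t] AR by (simp add: R_def)
  then have "char_poly A = char_poly B" by (rule char_poly_similar)
  also have "\<dots> = char_poly (mat 1 1 (\<lambda>_. l)) * char_poly A'"
    unfolding B_def by (rule char_poly_four_block_zeros_col) (use A' in auto)
  also have "\<dots> = [:- l, 1:] * char_poly A'" by (simp only: char_poly_singleton_mat)
  finally show ?thesis unfolding l_def .
qed

lemma Spec_eq_add_mset_of_char_poly:
  assumes A: "A \<in> carrier_mat n n" and A': "A' \<in> carrier_mat m m"
    and char_poly: "char_poly A = [:- l, 1:] * char_poly A'"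
  shows "Spec A = Spec A' + {#complex_of_real l#}"
proof -
  interpret map_poly_of_real: map_poly_comm_ring_hom complex_of_real ..
  have "Spec A = proots (map_poly complex_of_real (char_poly A))"
    unfolding Spec_def by (simp add: of_real_hom.char_poly_hom[OF A])
  also have "\<dots> = proots ([:- complex_of_real l, 1:] * map_poly complex_of_real (char_poly A'))"
    unfolding char_poly map_poly_of_real.hom_mult by simp
  also have "\<dots> = {#complex_of_real l#} + proots (map_poly complex_of_real (char_poly A'))"
    using degree_monic_char_poly[OF A'] by (subst proots_mult) auto
  also have "proots (map_poly complex_of_real (char_poly A')) = Spec A'"
    unfolding Spec_def by (simp add: of_real_hom.char_poly_hom[OF A'])
  finally show ?thesis by (simp add: add.commute)
qed

lemma sv_threshold_mat_carrier:
  "sv_threshold_mat k r p eps \<in> carrier_mat (r + 1 - k) (r + 1 - k)"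
  by (simp add: sv_threshold_mat_def)

lemma index_sv_threshold_mat:
  assumes "a < r + 1 - k" "b < r + 1 - k"
  shows "sv_threshold_mat k r p eps $$ (a, b) =
    (if a = b then p (k + a)
     else if even (k + max a b) then eps (k + min a b) (k + max a b) else 0)"
  using assms by (simp add: sv_threshold_mat_def Let_def)

theorem mainTheorem4:
  fixes k r :: nat
    and p p' :: "nat \<Rightarrow> real"
    and eps eps' :: "nat \<Rightarrow> nat \<Rightarrow> real"
  assumes "1 \<le> k" and "k < r"
    and "sv_threshold_weights k r eps"
    and "sv_threshold_weights (k + 1) r eps'"
    and "p k = p (k + 1)"
    and "\<And>j. k + 1 < j \<Longrightarrow> j \<le> r \<Longrightarrow> even j \<Longrightarrow> eps k j = eps (k + 1) j"
    and "\<And>i. k + 2 \<le> i \<Longrightarrow> i \<le> r \<Longrightarrow> p' i = p i"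
    and "p' (k + 1) = p k + (if even (k + 1) then eps k (k + 1) else 0)"
    and "\<And>i j. k + 1 < i \<Longrightarrow> i < j \<Longrightarrow> j \<le> r \<Longrightarrow> even j \<Longrightarrow> eps' i j = eps i j"
    and "\<And>j. k + 1 < j \<Longrightarrow> j \<le> r \<Longrightarrow> even j \<Longrightarrow> eps' (k + 1) j = sqrt 2 * eps (k + 1) j"
  shows "Spec (sv_threshold_mat k r p eps) =
           Spec (sv_threshold_mat (k + 1) r p' eps')
           + {# complex_of_real (p k - (if even (k + 1) then eps k (k + 1) else 0)) #}"
proof -
  define m where "m = r - k"
  have m: "0 < m" "r + 1 - k = Suc m" "r + 1 - (k + 1) = m"
    using assms(2) by (simp_all add: m_def)
  let ?A = "sv_threshold_mat k r p eps" and ?A' = "sv_threshold_mat (k + 1) r p' eps'"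
  have A: "?A \<in> carrier_mat (Suc m) (Suc m)" and A': "?A' \<in> carrier_mat m m"
    using sv_threshold_mat_carrier m by metis+
  have char_poly_A: "char_poly ?A = [:- (?A $$ (0, 0) - ?A $$ (0, 1)), 1:] * char_poly ?A'"
    by (rule char_poly_twin_reduction[OF A A' m(1), where s = "sqrt 2"])
      (use m in \<open>auto simp: m_def index_sv_threshold_mat assms(5-10)[simplified]\<close>)
  have eigenvalue: "?A $$ (0, 0) - ?A $$ (0, 1) = p k - (if even (k + 1) then eps k (k + 1) else 0)"
    using m by (simp add: index_sv_threshold_mat)
  show ?thesis
    using Spec_eq_add_mset_of_char_poly[OF A A' char_poly_A] unfolding eigenvalue .
qed

end
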